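(* Fix the signal accuracy $\phi\in(\tfrac12,1]$, a type distribution $F$ satisfying the assumptions below, and designer preferences $(A_1,A_0,B_1,B_0)\in\mathbb{R}_+^4$. Then, as the reward $r\to\infty$, the designer can attain an expected payoff arbitrarily close to $\max\{A_1,A_0,B_1,B_0\}$: for every $\varepsilon>0$ there exists $R$ such that for every $r>R$ there is a classifier $\delta\in[0,1]^2$ with $EU_D(\delta\mid r)\ge \max\{A_1,A_0,B_1,B_0\}-\varepsilon$.
   Context: A unit mass of individuals $i\in[0,1]$ each privately knows a cost $\gamma_i\in\mathbb{R}$ of choosing behavior $\beta_i=1$ (compliance) rather than $\beta_i=0$. Costs are distributed in the population according to a continuously differentiable CDF $F$ whose density $f$ is log-concave with full support on $\mathbb{R}$. A designer chooses a classifier $\delta=(\delta_1,\delta_0)\in[0,1]^2$. Each individual's behavior generates a signal $s_i\in\{0,1\}$ with $\Pr[s_i=\beta_i]=\phi$, and the classifier assigns a decision $d_i\in\{0,1\}$ with $\Pr[d_i=s_i\mid s_i]=\delta_{s_i}$. An individual with $d_i=1$ receives reward $r\in\mathbb{R}$ and incurs cost $\gamma_i$ if $\beta_i=1$. Let $\rho(\delta,\phi)=(\delta_1+\delta_0-1)(2\phi-1)$. Given $(\delta,r)$, individual $i$ chooses $\beta_i=1$ iff $\gamma_i\le r\rho(\delta,\phi)$, so the prevalence of compliance is $\pi=\pi_F(\delta,\phi,r)=F(r\rho(\delta,\phi))$. The designer receives $A_1$ from a complier with $d_i=1$, $A_0$ from a complier with $d_i=0$, $B_1$ from a non-complier with $d_i=0$,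 and $B_0$ from a non-complier with $d_i=1$; the designer's expected payoff is $EU_D(\delta\mid r)=\pi\big[\phi(A_1\delta_1+A_0(1-\delta_1))+(1-\phi)(A_0\delta_0+A_1(1-\delta_0))\big]+(1-\pi)\big[\phi(B_1\delta_0+B_0(1-\delta_0))+(1-\phi)(B_0\delta_1+B_1(1-\delta_1))\big]$. *)

theory Defs
  imports "HOL-Analysis.Analysis"
begin

definition admissible_cdf :: "(real \<Rightarrow> real) \<Rightarrow> (real \<Rightarrow> real) \<Rightarrow> bool" where
  "admissible_cdf F f \<longleftrightarrow>
     (\<forall>x. (F has_real_derivative f x) (at x)) \<and>
     continuous_on UNIV f \<and>
     mono F \<and>
     (F \<longlongrightarrow> 0) at_bot \<and> (F \<longlongrightarrow> 1) at_top \<and>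
     (\<forall>x. f x > 0) \<and>
     concave_on UNIV (\<lambda>x. ln (f x))"

definition rho :: "real \<Rightarrow> real \<Rightarrow> real \<Rightarrow> real" where
  "rho d1 d0 \<phi> = (d1 + d0 - 1) * (2 * \<phi> - 1)"

definition prevalence :: "(real \<Rightarrow> real) \<Rightarrow> real \<Rightarrow> real \<Rightarrow> real \<Rightarrow> real \<Rightarrow> real" where
  "prevalence F d1 d0 \<phi> r = F (r * rho d1 d0 \<phi>)"

definition EU_D :: "(real \<Rightarrow> real) \<Rightarrow> real \<Rightarrow> real \<Rightarrow> real \<Rightarrow> real \<Rightarrow> real \<Rightarrow> real
    \<Rightarrow> real \<Rightarrow> real \<Rightarrow> real" where
  "EU_D F \<phi> A1 A0 B1 B0 d1 d0 r =
     (let \<pi> = prevalence F d1 d0 \<phi> r in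
       \<pi> * (\<phi> * (A1 * d1 + A0 * (1 - d1)) + (1 - \<phi>) * (A0 * d0 + A1 * (1 - d0)))
     + (1 - \<pi>) * (\<phi> * (B1 * d0 + B0 * (1 - d0)) + (1 - \<phi>) * (B0 * d1 + B1 * (1 - d1))))"

end

theory Submission
  imports Defs
begin

text \<open>Only the limits of F at \<open>\<plusminus>\<infinity>\<close> and \<open>\<phi> > 1/2\<close> matter: a classifier that
  rewards the signal (\<open>\<delta>\<^sub>1 + \<delta>\<^sub>0 > 1\<close>) drives the prevalence to 1 as \<open>r \<rightarrow> \<infinity>\<close>, one
  that punishes it (\<open>\<delta>\<^sub>1 + \<delta>\<^sub>0 < 1\<close>) drives it to 0. In the limit the designer's
  payoff is the payoff from a population of compliers, resp. non-compliers, alone.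
  Among the classifiers \<open>(1, \<eta>)\<close>, \<open>(\<eta>, 1)\<close>, \<open>(0, 1 - \<eta>)\<close>, \<open>(1 - \<eta>, 0)\<close> with small
  \<open>\<eta> > 0\<close>, these limit payoffs are close to \<open>A\<^sub>1\<close>, \<open>A\<^sub>0\<close>, \<open>B\<^sub>1\<close>, \<open>B\<^sub>0\<close> respectively.\<close>

definition complier_payoff :: "real \<Rightarrow> real \<Rightarrow> real \<Rightarrow> real \<Rightarrow> real \<Rightarrow> real" where
  "complier_payoff \<phi> A1 A0 d1 d0 = \<phi> * (A1 * d1 + A0 * (1 - d1)) + (1 - \<phi>) * (A0 * d0 + A1 * (1 - d0))"

definition noncomplier_payoff :: "real \<Rightarrow> real \<Rightarrow> real \<Rightarrow> real \<Rightarrow> real \<Rightarrow> real" where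
  "noncomplier_payoff \<phi> B1 B0 d1 d0 = \<phi> * (B1 * d0 + B0 * (1 - d0)) + (1 - \<phi>) * (B0 * d1 + B1 * (1 - d1))"

lemma EU_D_eq_mixture:
  "EU_D F \<phi> A1 A0 B1 B0 d1 d0 r =
     prevalence F d1 d0 \<phi> r * complier_payoff \<phi> A1 A0 d1 d0
     + (1 - prevalence F d1 d0 \<phi> r) * noncomplier_payoff \<phi> B1 B0 d1 d0"
  by (simp add: EU_D_def complier_payoff_def noncomplier_payoff_def Let_def)

lemma prevalence_tendsto_1:
  assumes "(F \<longlongrightarrow> 1) at_top" "1/2 < \<phi>" "1 < d1 + d0"
  shows "((\<lambda>r. prevalence F d1 d0 \<phi> r) \<longlongrightarrow> 1) at_top"
proof -
  have "0 < rho d1 d0 \<phi>"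
    using assms(2,3) by (simp add: rho_def)
  then have "filterlim (\<lambda>r. rho d1 d0 \<phi> * r) at_top at_top"
    by (auto intro: filterlim_tendsto_pos_mult_at_top[OF tendsto_const] filterlim_ident)
  from filterlim_compose[OF assms(1) this] show ?thesis
    by (simp add: prevalence_def mult.commute)
qed

lemma prevalence_tendsto_0:
  assumes "(F \<longlongrightarrow> 0) at_bot" "1/2 < \<phi>" "d1 + d0 < 1"
  shows "((\<lambda>r. prevalence F d1 d0 \<phi> r) \<longlongrightarrow> 0) at_top"
proof -
  have "rho d1 d0 \<phi> < 0"
    using assms(2,3) by (simp add: rho_def mult_neg_pos)
  then have "filterlim (\<lambda>r. rho d1 d0 \<phi> * r) at_bot at_top"
    by (auto intro: filterlim_tendsto_neg_mult_at_bot[OF tendsto_const] filterlim_ident)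
  from filterlim_compose[OF assms(1) this] show ?thesis
    by (simp add: prevalence_def mult.commute)
qed

lemma EU_D_tendsto_complier_payoff:
  assumes "(F \<longlongrightarrow> 1) at_top" "1/2 < \<phi>" "1 < d1 + d0"
  shows "((\<lambda>r. EU_D F \<phi> A1 A0 B1 B0 d1 d0 r) \<longlongrightarrow> complier_payoff \<phi> A1 A0 d1 d0) at_top"
proof -
  have "((\<lambda>r. prevalence F d1 d0 \<phi> r * complier_payoff \<phi> A1 A0 d1 d0
      + (1 - prevalence F d1 d0 \<phi> r) * noncomplier_payoff \<phi> B1 B0 d1 d0)
      \<longlongrightarrow> 1 * complier_payoff \<phi> A1 A0 d1 d0 + (1 - 1) * noncomplier_payoff \<phi> B1 B0 d1 d0) at_top"
    by (intro tendsto_intros prevalence_tendsto_1 assms)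
  then show ?thesis
    by (simp add: EU_D_eq_mixture)
qed

lemma EU_D_tendsto_noncomplier_payoff:
  assumes "(F \<longlongrightarrow> 0) at_bot" "1/2 < \<phi>" "d1 + d0 < 1"
  shows "((\<lambda>r. EU_D F \<phi> A1 A0 B1 B0 d1 d0 r) \<longlongrightarrow> noncomplier_payoff \<phi> B1 B0 d1 d0) at_top"
proof -
  have "((\<lambda>r. prevalence F d1 d0 \<phi> r * complier_payoff \<phi> A1 A0 d1 d0
      + (1 - prevalence F d1 d0 \<phi> r) * noncomplier_payoff \<phi> B1 B0 d1 d0)
      \<longlongrightarrow> 0 * complier_payoff \<phi> A1 A0 d1 d0 + (1 - 0) * noncomplier_payoff \<phi> B1 B0 d1 d0) at_top"
    by (intro tendsto_intros prevalence_tendsto_0 assms)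
  then show ?thesis
    by (simp add: EU_D_eq_mixture)
qed

lemma isCont_exists_right_gt:
  fixes g :: "real \<Rightarrow> real"
  assumes "isCont g 0" "v < g 0"
  shows "\<exists>\<eta>. 0 < \<eta> \<and> \<eta> < 1 \<and> v < g \<eta>"
proof -
  have "(g \<longlongrightarrow> g 0) (at_right 0)"
    using assms(1) filterlim_at_split isCont_def by blast
  then have "\<forall>\<^sub>F \<eta> in at_right 0. v < g \<eta>"
    using assms(2) order_tendstoD(1) by blast
  moreover have "\<forall>\<^sub>F \<eta> in at_right (0::real). 0 < \<eta> \<and> \<eta> < 1"
    by (auto simp: eventually_at_right[of 0 1] intro!: exI[of _ 1])
  ultimately have "\<forall>\<^sub>F \<eta> in at_right (0::real). 0 < \<eta> \<and> \<eta> < 1 \<and> v < g \<eta>"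
    by eventually_elim blast
  then show ?thesis
    using eventually_happens' trivial_limit_at_right_real by blast
qed

lemma complier_value_attainable:
  assumes "(F \<longlongrightarrow> 1) at_top" "1/2 < \<phi>" "A \<in> {A1, A0}" "v < A"
  shows "\<exists>d1\<in>{0..1}. \<exists>d0\<in>{0..1}. \<forall>\<^sub>F r in at_top. v < EU_D F \<phi> A1 A0 B1 B0 d1 d0 r"
proof -
  obtain d1 d0 where "d1 \<in> {0..1}" "d0 \<in> {0..1}" "1 < d1 + d0"
    and "v < complier_payoff \<phi> A1 A0 d1 d0"
  proof (cases "A = A1")
    case True
    have "isCont (\<lambda>\<eta>. complier_payoff \<phi> A1 A0 1 \<eta>) 0"
      by (simp add: complier_payoff_def)
    moreover have "complier_payoff \<phi> A1 A0 1 0 = A1"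
      by (simp add: complier_payoff_def algebra_simps)
    ultimately obtain \<eta> where "0 < \<eta>" "\<eta> < 1" "v < complier_payoff \<phi> A1 A0 1 \<eta>"
      using isCont_exists_right_gt assms(4) True by metis
    then show ?thesis
      by (intro that[of 1 \<eta>]) auto
  next
    case False
    with assms(3) have "A = A0" by simp
    have "isCont (\<lambda>\<eta>. complier_payoff \<phi> A1 A0 \<eta> 1) 0"
      by (simp add: complier_payoff_def)
    moreover have "complier_payoff \<phi> A1 A0 0 1 = A0"
      by (simp add: complier_payoff_def algebra_simps)
    ultimately obtain \<eta> where "0 < \<eta>" "\<eta> < 1" "v < complier_payoff \<phi> A1 A0 \<eta> 1"
      using isCont_exists_right_gt assms(4) \<open>A = A0\<close> by metis
    then show ?thesis
      by (intro that[of \<eta> 1]) auto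
  qed
  with order_tendstoD(1)[OF EU_D_tendsto_complier_payoff[OF assms(1,2)]] show ?thesis
    by blast
qed

lemma noncomplier_value_attainable:
  assumes "(F \<longlongrightarrow> 0) at_bot" "1/2 < \<phi>" "B \<in> {B1, B0}" "v < B"
  shows "\<exists>d1\<in>{0..1}. \<exists>d0\<in>{0..1}. \<forall>\<^sub>F r in at_top. v < EU_D F \<phi> A1 A0 B1 B0 d1 d0 r"
proof -
  obtain d1 d0 where "d1 \<in> {0..1}" "d0 \<in> {0..1}" "d1 + d0 < 1"
    and "v < noncomplier_payoff \<phi> B1 B0 d1 d0"
  proof (cases "B = B1")
    case True
    have "isCont (\<lambda>\<eta>. noncomplier_payoff \<phi> B1 B0 0 (1 - \<eta>)) 0"
      by (simp add: noncomplier_payoff_def)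
    moreover have "noncomplier_payoff \<phi> B1 B0 0 (1 - 0) = B1"
      by (simp add: noncomplier_payoff_def algebra_simps)
    ultimately obtain \<eta> where "0 < \<eta>" "\<eta> < 1" "v < noncomplier_payoff \<phi> B1 B0 0 (1 - \<eta>)"
      using isCont_exists_right_gt assms(4) True by metis
    then show ?thesis
      by (intro that[of 0 "1 - \<eta>"]) auto
  next
    case False
    with assms(3) have "B = B0" by simp
    have "isCont (\<lambda>\<eta>. noncomplier_payoff \<phi> B1 B0 (1 - \<eta>) 0) 0"
      by (simp add: noncomplier_payoff_def)
    moreover have "noncomplier_payoff \<phi> B1 B0 (1 - 0) 0 = B0"
      by (simp add: noncomplier_payoff_def algebra_simps)
    ultimately obtain \<eta> where "0 < \<eta>" "\<eta> < 1" "v < noncomplier_payoff \<phi> B1 B0 (1 - \<eta>) 0"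
      using isCont_exists_right_gt assms(4) \<open>B = B0\<close> by metis
    then show ?thesis
      by (intro that[of "1 - \<eta>" 0]) auto
  qed
  with order_tendstoD(1)[OF EU_D_tendsto_noncomplier_payoff[OF assms(1,2)]] show ?thesis
    by blast
qed

theorem proposition1:
  fixes F f :: "real \<Rightarrow> real" and \<phi> A1 A0 B1 B0 :: real
  assumes "1/2 < \<phi>" "\<phi> \<le> 1"
    and "admissible_cdf F f"
    and "0 \<le> A1" "0 \<le> A0" "0 \<le> B1" "0 \<le> B0"
  shows "\<forall>\<epsilon>>0. \<exists>R. \<forall>r>R. \<exists>d1 d0.
           d1 \<in> {0..1} \<and> d0 \<in> {0..1} \<and>
           EU_D F \<phi> A1 A0 B1 B0 d1 d0 r \<ge> Max {A1, A0, B1, B0} - \<epsilon>"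
proof (intro allI impI)
  fix \<epsilon> :: real
  assume "0 < \<epsilon>"
  define M where "M = Max {A1, A0, B1, B0}"
  have limits: "(F \<longlongrightarrow> 1) at_top" "(F \<longlongrightarrow> 0) at_bot"
    using assms(3) by (auto simp: admissible_cdf_def)
  have "M \<in> {A1, A0, B1, B0}"
    unfolding M_def by (rule Max_in) auto
  obtain d1 d0 where d: "d1 \<in> {0..1}" "d0 \<in> {0..1}"
    and "\<forall>\<^sub>F r in at_top. M - \<epsilon> < EU_D F \<phi> A1 A0 B1 B0 d1 d0 r"
  proof (cases "M \<in> {A1, A0}")
    case True
    then show ?thesis
      using complier_value_attainable[OF limits(1) assms(1) True, where v = "M - \<epsilon>"]
        that \<open>0 < \<epsilon>\<close>
      by fastforce
  next
    case False
    with \<open>M \<in> {A1, A0, B1, B0}\<close> have "M \<in> {B1, B0}" by blast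
    show ?thesis
      using noncomplier_value_attainable[OF limits(2) assms(1) \<open>M \<in> {B1, B0}\<close>, where v = "M - \<epsilon>"]
        that \<open>0 < \<epsilon>\<close>
      by fastforce
  qed
  then obtain R where R: "\<And>r. R \<le> r \<Longrightarrow> M - \<epsilon> < EU_D F \<phi> A1 A0 B1 B0 d1 d0 r"
    by (auto simp: eventually_at_top_linorder)
  then have "M - \<epsilon> \<le> EU_D F \<phi> A1 A0 B1 B0 d1 d0 r" if "R < r" for r
    using that by (simp add: less_imp_le)
  with d show "\<exists>R. \<forall>r>R. \<exists>d1 d0. d1 \<in> {0..1} \<and> d0 \<in> {0..1} \<and>
      EU_D F \<phi> A1 A0 B1 B0 d1 d0 r \<ge> Max {A1, A0, B1, B0} - \<epsilon>"
    unfolding M_def by blast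
qed

end
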